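(* Let $n, d, d_k, d_v \ge 1$, let $W_Q, W_K \in \mathbb{R}^{d\times d_k}$, $W_V \in \mathbb{R}^{d \times d_v}$ be fixed (deterministic) matrices, and for $x \in \mathbb{R}^{n\times d}$ let $$\mathrm{Attn}(x) = \mathrm{softmax}\!\left(\frac{(xW_Q)(xW_K)^\top}{\sqrt{d_k}}\right) x W_V,$$ with softmax applied row-wise. Let $h^{(0)} \in \mathbb{R}^{n\times d}$ be a random matrix whose rows $h^{(0)}_1,\dots,h^{(0)}_n$ are independent with $h^{(0)}_i \sim N(0,\sigma^2 I_d)$ for some $\sigma>0$. Then $\mathbb{E}[\mathrm{Attn}(h^{(0)})] = 0$.
   Context: Row-wise softmax: for $S\in\mathbb{R}^{n\times n}$, $\mathrm{softmax}(S)_{ij} = e^{S_{ij}}/\sum_{k} e^{S_{ik}}$. The expectation is entrywise. *)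

theory Defs
  imports "HOL-Probability.Probability"
begin

text \<open>Matrices are represented as functions nat => nat => real, with explicit
dimension bounds. An (r x c) matrix A is meaningful on indices i < r, j < c.\<close>

definition matmul :: "nat \<Rightarrow> (nat \<Rightarrow> nat \<Rightarrow> real) \<Rightarrow> (nat \<Rightarrow> nat \<Rightarrow> real) \<Rightarrow> nat \<Rightarrow> nat \<Rightarrow> real" where
  "matmul m A B = (\<lambda>i k. \<Sum>j<m. A i j * B j k)"

definition mtranspose :: "(nat \<Rightarrow> nat \<Rightarrow> real) \<Rightarrow> nat \<Rightarrow> nat \<Rightarrow> real" where
  "mtranspose A = (\<lambda>i j. A j i)"

definition softmax :: "nat \<Rightarrow> (nat \<Rightarrow> nat \<Rightarrow> real) \<Rightarrow> nat \<Rightarrow> nat \<Rightarrow> real" where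
  "softmax n S = (\<lambda>i j. exp (S i j) / (\<Sum>k<n. exp (S i k)))"

definition attn :: "nat \<Rightarrow> nat \<Rightarrow> nat \<Rightarrow> (nat \<Rightarrow> nat \<Rightarrow> real) \<Rightarrow> (nat \<Rightarrow> nat \<Rightarrow> real)
    \<Rightarrow> (nat \<Rightarrow> nat \<Rightarrow> real) \<Rightarrow> (nat \<Rightarrow> nat \<Rightarrow> real) \<Rightarrow> nat \<Rightarrow> nat \<Rightarrow> real" where
  "attn n d dk WQ WK WV x =
     matmul n
       (softmax n (\<lambda>i k. matmul dk (matmul d x WQ) (mtranspose (matmul d x WK)) i k / sqrt (real dk)))
       (matmul d x WV)"

definition gaussian_vec :: "nat \<Rightarrow> real \<Rightarrow> (nat \<Rightarrow> real) measure" where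
  "gaussian_vec d \<sigma> = PiM {..<d} (\<lambda>_. density lborel (normal_density 0 \<sigma>))"

end

theory Submission
  imports Defs
begin

text \<open>The attention output is an odd function of its input: the score matrix
\<open>(x W_Q)(x W_K)\<^sup>T\<close> is quadratic in \<open>x\<close>, so the softmax weights are unchanged by
\<open>x \<mapsto> -x\<close> while the values \<open>x W_V\<close> change sign. The joint law of independent
centred Gaussian rows is invariant under \<open>x \<mapsto> -x\<close>, so the expectation of every
entry equals its own negative.\<close>

lemma attn_uminus:
  "attn n d dk WQ WK WV (\<lambda>k j. - x k j) i l = - attn n d dk WQ WK WV x i l"
  unfolding attn_def matmul_def softmax_def mtranspose_def
  by (simp add: sum_negf sum_distrib_left)

lemma attn_restrict:
  assumes "i < n"
  shows "attn n d dk WQ WK WV (\<lambda>k\<in>{..<n}. \<lambda>j\<in>{..<d}. x k j) i l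
           = attn n d dk WQ WK WV x i l"
  unfolding attn_def matmul_def softmax_def mtranspose_def
  by (intro sum.cong refl arg_cong2[where f="(*)"] arg_cong2[where f="(/)"] arg_cong[where f=exp])
     (use assms in auto)

lemma attn_odd:
  assumes "i < n"
  shows "attn n d dk WQ WK WV (\<lambda>k\<in>{..<n}. \<lambda>j\<in>{..<d}. - x k j) i l
           = - attn n d dk WQ WK WV x i l"
  using attn_restrict[OF assms, of _ _ _ _ _ "\<lambda>k j. - x k j"] by (simp add: attn_uminus)

text \<open>Stated for all indices, so that the measurability prover needs no range side conditions
inside the sums of \<open>attn\<close>; off range the entry is constant on the product space.\<close>

lemma measurable_PiM_entry:
  "(\<lambda>y. y k j)
     \<in> measurable (PiM I (\<lambda>_. PiM J (\<lambda>_. borel))) (borel :: 'b::topological_space measure)"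
proof (cases "k \<in> I \<and> j \<in> J")
  case True
  then show ?thesis
    by (auto intro!: measurable_compose[OF measurable_component_singleton[of k I]
                                          measurable_component_singleton[of j J]])
next
  case False
  define c :: 'b where "c = (if k \<in> I then undefined else undefined j)"
  have "y k j = c" if "y \<in> space (PiM I (\<lambda>_. PiM J (\<lambda>_. borel)))" for y
    using that False by (auto simp: c_def space_PiM PiE_def extensional_def)
  then show ?thesis
    by (subst measurable_cong[where g="\<lambda>_. c"]) auto
qed

lemma measurable_attn:
  "(\<lambda>x. attn n d dk WQ WK WV x i l) \<in> borel_measurable (PiM I (\<lambda>_. PiM J (\<lambda>_. borel)))"
  supply measurable_PiM_entry [measurable]
  unfolding attn_def matmul_def softmax_def mtranspose_def
  by measurable

lemma integral_odd_eq_0: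
  fixes g :: "'a \<Rightarrow> 'b::{banach, second_countable_topology}"
  assumes T: "T \<in> measurable N N" and invariant: "distr N N T = N"
    and g: "g \<in> borel_measurable N" and odd: "\<And>y. y \<in> space N \<Longrightarrow> g (T y) = - g y"
  shows "integral\<^sup>L N g = 0"
proof -
  have "integral\<^sup>L N g = integral\<^sup>L (distr N N T) g"
    unfolding invariant ..
  also have "\<dots> = integral\<^sup>L N (\<lambda>y. g (T y))"
    by (rule integral_distr[OF T g])
  also have "\<dots> = integral\<^sup>L N (\<lambda>y. - g y)"
    by (rule Bochner_Integration.integral_cong[OF refl odd])
  also have "\<dots> = - integral\<^sup>L N g"
    by (rule Bochner_Integration.integral_minus)
  finally have "2 *\<^sub>R integral\<^sup>L N g = 0"
    by (simp add: scaleR_2 eq_neg_iff_add_eq_0)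
  then show ?thesis
    by simp
qed

lemma distr_PiM_compose_invariant:
  assumes "finite I" "prob_space N" "T \<in> measurable N N" "distr N N T = N"
  shows "distr (PiM I (\<lambda>_. N)) (PiM I (\<lambda>_. N)) (compose I T) = PiM I (\<lambda>_. N)"
  using distr_PiM_finite_prob_space'[of I "\<lambda>_. N" "\<lambda>_. N" T] assms by simp

lemma (in prob_space) distr_indep_vars_identically_distributed:
  assumes "I \<noteq> {}" and indep: "indep_vars (\<lambda>_. S) X I"
    and law: "\<And>i. i \<in> I \<Longrightarrow> distr M S (X i) = N" and sets_N: "sets N = sets S"
  shows "distr M (PiM I (\<lambda>_. N)) (\<lambda>\<omega>. \<lambda>i\<in>I. X i \<omega>) = PiM I (\<lambda>_. N)"
proof -
  have rv: "\<And>i. i \<in> I \<Longrightarrow> random_variable S (X i)"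
    using indep by (simp add: indep_vars_def)
  have "distr M (PiM I (\<lambda>_. N)) (\<lambda>\<omega>. \<lambda>i\<in>I. X i \<omega>)
      = distr M (PiM I (\<lambda>_. S)) (\<lambda>\<omega>. \<lambda>i\<in>I. X i \<omega>)"
    by (intro distr_cong refl sets_PiM_cong) (simp_all add: sets_N)
  also have "\<dots> = PiM I (\<lambda>i. distr M S (X i))"
    using indep_vars_iff_distr_eq_PiM'[OF \<open>I \<noteq> {}\<close> rv] indep by simp
  also have "\<dots> = PiM I (\<lambda>_. N)"
    by (intro PiM_cong refl) (simp add: law)
  finally show ?thesis .
qed

lemma distr_normal_density_uminus:
  "distr (density lborel (normal_density 0 \<sigma>)) borel uminus = density lborel (normal_density 0 \<sigma>)"
proof -
  have "density lborel (normal_density 0 \<sigma>) = density (distr lborel borel uminus) (normal_density 0 \<sigma>)"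
    by (simp add: lborel_distr_uminus)
  also have "\<dots> = distr (density lborel (\<lambda>x. normal_density 0 \<sigma> (- x))) borel uminus"
    by (rule density_distr) auto
  also have "(\<lambda>x. normal_density 0 \<sigma> (- x)) = normal_density 0 \<sigma>"
    by (auto simp: normal_density_def fun_eq_iff)
  finally show ?thesis
    by simp
qed

lemma sets_gaussian_vec: "sets (gaussian_vec d \<sigma>) = sets (PiM {..<d} (\<lambda>_. borel))"
  unfolding gaussian_vec_def by (intro sets_PiM_cong) auto

lemma prob_space_gaussian_vec: "\<sigma> > 0 \<Longrightarrow> prob_space (gaussian_vec d \<sigma>)"
  unfolding gaussian_vec_def by (intro prob_space_PiM prob_space_normal_density)

lemma measurable_compose_uminus_gaussian_vec:
  "compose {..<d} uminus \<in> measurable (gaussian_vec d \<sigma>) (gaussian_vec d \<sigma>)"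
  unfolding measurable_cong_sets[OF sets_gaussian_vec sets_gaussian_vec] compose_def
  by measurable

lemma distr_gaussian_vec_uminus:
  assumes "\<sigma> > 0"
  shows "distr (gaussian_vec d \<sigma>) (gaussian_vec d \<sigma>) (compose {..<d} uminus) = gaussian_vec d \<sigma>"
  unfolding gaussian_vec_def
proof (rule distr_PiM_compose_invariant)
  let ?N = "density lborel (normal_density 0 \<sigma>)"
  show "uminus \<in> measurable ?N ?N"
    by (subst measurable_cong_sets[of _ borel _ borel]) simp_all
  have "distr ?N ?N uminus = distr ?N borel uminus"
    by (rule distr_cong) simp_all
  then show "distr ?N ?N uminus = ?N"
    by (simp add: distr_normal_density_uminus)
qed (simp_all add: prob_space_normal_density assms)

definition gaussian_rows :: "nat \<Rightarrow> nat \<Rightarrow> real \<Rightarrow> (nat \<Rightarrow> nat \<Rightarrow> real) measure" where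
  "gaussian_rows n d \<sigma> = PiM {..<n} (\<lambda>_. gaussian_vec d \<sigma>)"

lemma sets_gaussian_rows:
  "sets (gaussian_rows n d \<sigma>) = sets (PiM {..<n} (\<lambda>_. PiM {..<d} (\<lambda>_. borel)))"
  unfolding gaussian_rows_def by (intro sets_PiM_cong) (simp_all add: sets_gaussian_vec)

lemma integral_gaussian_rows_odd_eq_0:
  fixes g :: "(nat \<Rightarrow> nat \<Rightarrow> real) \<Rightarrow> real"
  assumes "\<sigma> > 0" and g: "g \<in> borel_measurable (PiM {..<n} (\<lambda>_. PiM {..<d} (\<lambda>_. borel)))"
    and odd: "\<And>x. g (\<lambda>k\<in>{..<n}. \<lambda>j\<in>{..<d}. - x k j) = - g x"
  shows "integral\<^sup>L (gaussian_rows n d \<sigma>) g = 0"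
proof (rule integral_odd_eq_0)
  let ?neg = "compose {..<n} (compose {..<d} (uminus :: real \<Rightarrow> real))"
  show "?neg \<in> measurable (gaussian_rows n d \<sigma>) (gaussian_rows n d \<sigma>)"
    unfolding gaussian_rows_def compose_def[of "{..<n}"]
    by (intro measurable_restrict measurable_compose[OF _ measurable_compose_uminus_gaussian_vec]
        measurable_component_singleton)
  show "distr (gaussian_rows n d \<sigma>) (gaussian_rows n d \<sigma>) ?neg = gaussian_rows n d \<sigma>"
    unfolding gaussian_rows_def
    by (intro distr_PiM_compose_invariant prob_space_gaussian_vec distr_gaussian_vec_uminus
        measurable_compose_uminus_gaussian_vec \<open>\<sigma> > 0\<close>) simp
  show "g \<in> borel_measurable (gaussian_rows n d \<sigma>)"
    using g by (simp add: measurable_cong_sets[OF sets_gaussian_rows refl])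
  fix x assume "x \<in> space (gaussian_rows n d \<sigma>)"
  then have "?neg x = (\<lambda>k\<in>{..<n}. \<lambda>j\<in>{..<d}. - x k j)"
    by (auto simp: compose_def gaussian_rows_def space_PiM)
  then show "g (?neg x) = - g x"
    by (simp add: odd)
qed

theorem proposition3:
  fixes M :: "'a measure"
    and n d dk dv :: nat and \<sigma> :: real
    and WQ WK WV :: "nat \<Rightarrow> nat \<Rightarrow> real"
    and h :: "'a \<Rightarrow> nat \<Rightarrow> nat \<Rightarrow> real"
  assumes "prob_space M"
    and "n \<ge> 1" "d \<ge> 1" "dk \<ge> 1" "dv \<ge> 1" "\<sigma> > 0"
    and indep: "prob_space.indep_vars M (\<lambda>_. PiM {..<d} (\<lambda>_. borel))
                  (\<lambda>i \<omega>. \<lambda>j\<in>{..<d}. h \<omega> i j) {..<n}"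
    and gauss: "\<And>i. i < n \<Longrightarrow>
                  distr M (PiM {..<d} (\<lambda>_. borel)) (\<lambda>\<omega>. \<lambda>j\<in>{..<d}. h \<omega> i j) = gaussian_vec d \<sigma>"
  shows "\<forall>i<n. \<forall>l<dv. prob_space.expectation M (\<lambda>\<omega>. attn n d dk WQ WK WV (h \<omega>) i l) = 0"
proof (intro allI impI)
  fix i l assume "i < n"
  interpret prob_space M by fact
  define H where "H = (\<lambda>\<omega>. \<lambda>k\<in>{..<n}. \<lambda>j\<in>{..<d}. h \<omega> k j)"
  have rows: "(\<lambda>\<omega>. \<lambda>j\<in>{..<d}. h \<omega> k j) \<in> measurable M (PiM {..<d} (\<lambda>_. borel))"
    if "k < n" for k
    using indep that by (simp add: indep_vars_def)
  have H: "H \<in> measurable M (gaussian_rows n d \<sigma>)"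
    unfolding H_def measurable_cong_sets[OF refl sets_gaussian_rows]
    by (rule measurable_restrict) (simp add: rows)
  have law: "distr M (gaussian_rows n d \<sigma>) H = gaussian_rows n d \<sigma>"
    unfolding gaussian_rows_def H_def
    using distr_indep_vars_identically_distributed[OF _ indep, of "gaussian_vec d \<sigma>"] \<open>n \<ge> 1\<close>
    by (simp add: gauss sets_gaussian_vec lessThan_empty_iff)
  have "expectation (\<lambda>\<omega>. attn n d dk WQ WK WV (h \<omega>) i l)
      = expectation (\<lambda>\<omega>. attn n d dk WQ WK WV (H \<omega>) i l)"
    unfolding H_def using attn_restrict[OF \<open>i < n\<close>] by simp
  also have "\<dots> = integral\<^sup>L (gaussian_rows n d \<sigma>) (\<lambda>x. attn n d dk WQ WK WV x i l)"
    using integral_distr[OF H, of "\<lambda>x. attn n d dk WQ WK WV x i l"] law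
    by (simp add: measurable_cong_sets[OF sets_gaussian_rows refl] measurable_attn)
  also have "\<dots> = 0"
    using \<open>\<sigma> > 0\<close> measurable_attn attn_odd[OF \<open>i < n\<close>]
    by (rule integral_gaussian_rows_odd_eq_0)
  finally show "expectation (\<lambda>\<omega>. attn n d dk WQ WK WV (h \<omega>) i l) = 0" .
qed

end
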